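(* Consider a check node decoder (CND) whose EXIT function on the BEC is $$I_{E,C}(p)=\sum_{j\ge2}\rho^{(\mathrm{SPC})}_j(1-p)^{j-1}+\sum_{i}\rho_i\,I^{(i)}_{E,C}(p),$$ where the nonnegative edge fractions $\rho^{(\mathrm{SPC})}_j$ and $\rho_i$ sum to $1$, and for each $i$, $I^{(i)}_{E,C}$ is the check-node EXIT function of an $(n_i,k_i)$ binary linear code $\mathcal{C}_i$ with $n_i\ge2$, $k_i\ge1$ and $d_{\min}(\mathcal{C}_i)\ge2$. Then $$\frac{\mathrm{d}I_{E,C}(p)}{\mathrm{d}p}\Big|_{p=0}=-\rho'_{\mathrm{SPC}}(1)-\sum_{i:\,d_{\min}(\mathcal{C}_i)=2}\frac{2\rho_i}{n_i}\,\Delta^{(i)}_{n_i-2},$$ i.e. only the component codes $\mathcal{C}_i$ with minimum distance exactly $2$ (together with the SPC terms) contribute.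
   Context: $\rho_{\mathrm{SPC}}(x)=\sum_{j\ge2}\rho^{(\mathrm{SPC})}_jx^{j-1}$, so $\rho'_{\mathrm{SPC}}(1)=\sum_{j\ge2}(j-1)\rho^{(\mathrm{SPC})}_j$. For an $(n,k)$ code with $k\times n$ generator matrix $\mathbf{G}$ of rank $k$: $\tilde e_g=\sum_{|S|=g}\operatorname{rank}(\mathbf{G}_S)$ (sum over $g$-element sets $S$ of columns), $a_t=(n-t)\tilde e_{n-t}-(t+1)\tilde e_{n-t-1}$, and its check-node EXIT function is $I_E(p)=1-\frac1n\sum_{t=0}^{n-1}a_tp^t(1-p)^{n-t-1}$. $\Delta^{(i)}_{n_i-2}=\sum_{|S|=n_i-2}\big(k_i-\operatorname{rank}(\mathbf{G}^{(i)}_S)\big)$, the sum over all $(n_i-2)$-element column sets of a generator matrix $\mathbf{G}^{(i)}$ of $\mathcal{C}_i$ (this value does not depend on the choice of generator matrix). *)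

theory Defs
  imports "HOL-Library.Z2" "Jordan_Normal_Form.DL_Rank" "Jordan_Normal_Form.DL_Submatrix"
begin

text \<open>Binary linear codes are given by a generator matrix G over GF(2) (type bit),
  of dimension k x n (k = dim_row G, n = dim_col G).\<close>

definition gen_rank :: "bit mat \<Rightarrow> nat" where
  "gen_rank G = vec_space.rank (dim_row G) G"

definition col_rank :: "bit mat \<Rightarrow> nat set \<Rightarrow> nat" where
  "col_rank G S = vec_space.rank (dim_row G) (submatrix G {..<dim_row G} S)"

definition codewords :: "bit mat \<Rightarrow> bit vec set" where
  "codewords G = {mult_mat_vec (transpose_mat G) u | u. u \<in> carrier_vec (dim_row G)}"

definition hweight :: "bit vec \<Rightarrow> nat" where
  "hweight c = card {j. j < dim_vec c \<and> c $ j \<noteq> 0}"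

definition dmin :: "bit mat \<Rightarrow> nat" where
  "dmin G = Min (hweight ` (codewords G - {0\<^sub>v (dim_col G)}))"

definition e_tilde :: "bit mat \<Rightarrow> nat \<Rightarrow> nat" where
  "e_tilde G g = (\<Sum>S\<in>{S. S \<subseteq> {..<dim_col G} \<and> card S = g}. col_rank G S)"

definition a_coef :: "bit mat \<Rightarrow> nat \<Rightarrow> real" where
  "a_coef G t = real (dim_col G - t) * real (e_tilde G (dim_col G - t))
               - real (t + 1) * real (e_tilde G (dim_col G - t - 1))"

definition exit_cnd :: "bit mat \<Rightarrow> real \<Rightarrow> real" where
  "exit_cnd G p = 1 - (1 / real (dim_col G)) *
     (\<Sum>t = 0..<dim_col G. a_coef G t * p ^ t * (1 - p) ^ (dim_col G - t - 1))"

definition Delta :: "bit mat \<Rightarrow> nat" where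
  "Delta G = (\<Sum>S\<in>{S. S \<subseteq> {..<dim_col G} \<and> card S = dim_col G - 2}.
                 dim_row G - col_rank G S)"

end

theory Submission
  imports Defs
begin

text \<open>
  The EXIT function is a fixed combination of the SPC terms and of the component EXIT
  functions 1 - (1/n) * sum_t a_t p^t (1-p)^(n-t-1), so its slope at p = 0 is the same
  combination of slopes. Each Bernstein-type term has zero slope at 0 unless t <= 1,
  hence a component contributes -(a_1 - (n-1) a_0)/n. The coefficients a_0, a_1 only
  involve the column-rank sums e_n, e_(n-1), e_(n-2). The coding-theoretic core is the
  classical fact that any set of more than n - d_min columns of a generator matrix has
  full rank k: a rank deficiency yields a nonzero vector u orthogonal to those columns,
  and u G is a nonzero codeword vanishing on them. For d_min >= 2 this gives a_0 = 0 and
  a_1 = 2 Delta_(n-2), and for d_min >= 3 it gives Delta_(n-2) = 0, so only the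
  components with d_min = 2 survive. The slope identity is linear in the edge fractions.
\<close>

text \<open>Fewer than n vectors in F^n have a common nonzero orthogonal vector: stack them as rows
  of an n x n matrix with a zero row; it is singular, and a kernel vector does the job.\<close>
lemma few_vectors_common_orthogonal:
  fixes S :: "'a :: field vec set"
  assumes fin: "finite S" and carr: "S \<subseteq> carrier_vec n" and few: "card S < n"
  shows "\<exists>u \<in> carrier_vec n. u \<noteq> 0\<^sub>v n \<and> (\<forall>v \<in> S. u \<bullet> v = 0)"
proof -
  obtain vs where vs: "set vs = S" "distinct vs" using fin finite_distinct_list by blast
  have len: "length vs < n" using vs few distinct_card by fastforce
  define rowv where "rowv i = (if i < length vs then vs ! i else 0\<^sub>v n)" for i
  define B where "B = mat\<^sub>r n n rowv"
  have rowv_carr: "rowv \<in> {0..<n} \<rightarrow> carrier_vec n"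
    using carr vs nth_mem unfolding rowv_def by fastforce
  have "B = mat\<^sub>r n n (\<lambda>i. if i = n - 1 then 0\<^sub>v n else rowv i)"
    unfolding B_def using len by (intro eq_matI) (auto simp: rowv_def)
  hence "det B = 0" using det_row_0[OF _ rowv_carr, of "n - 1"] len by simp
  then obtain u where u: "u \<in> carrier_vec n" "u \<noteq> 0\<^sub>v n" "B *\<^sub>v u = 0\<^sub>v n"
    using det_0_iff_vec_prod_zero_field[of B n] unfolding B_def by auto
  have "u \<bullet> vs ! i = 0" if i: "i < length vs" for i
  proof -
    have vi: "vs ! i \<in> carrier_vec n" using carr vs i nth_mem by blast
    moreover have "row B i = vs ! i" using i len vi unfolding B_def by (simp add: rowv_def)
    hence "vs ! i \<bullet> u = 0"
      using arg_cong[OF u(3), of "\<lambda>w. w $ i"] i len unfolding B_def by auto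
    ultimately show ?thesis using comm_scalar_prod[OF _ u(1)] by metis
  qed
  thus ?thesis using u(1,2) vs(1) by (metis in_set_conv_nth)
qed

context vec_space
begin

lemma obtain_maximal_indpt_cols:
  assumes "A \<in> carrier_mat n m"
  obtains S where "maximal S (\<lambda>T. T \<subseteq> set (cols A) \<and> lin_indpt T)" "rank A = card S"
    "S \<subseteq> set (cols A)" "lin_indpt S" "finite S"
proof -
  obtain S where S: "maximal S (\<lambda>T. T \<subseteq> set (cols A) \<and> lin_indpt T)"
    using maximal_exists[of "\<lambda>T. T \<subseteq> set (cols A) \<and> lin_indpt T" "card (set (cols A))" "{}"]
    by (meson List.finite_set card_mono empty_iff empty_subsetI finite_lin_indpt2 rev_finite_subset)
  hence "S \<subseteq> set (cols A)" "lin_indpt S" by (auto simp: maximal_def)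
  with S show ?thesis using that rank_card_indpt[OF assms S] finite_subset by blast
qed

lemma maximal_indpt_spans:
  assumes T: "T \<subseteq> carrier_vec n" and S: "maximal S (\<lambda>U. U \<subseteq> T \<and> lin_indpt U)"
  shows "T \<subseteq> span S"
proof
  fix v assume v: "v \<in> T"
  have ST: "S \<subseteq> T" "lin_indpt S" using S by (auto simp: maximal_def)
  have Sc: "S \<subseteq> carrier_vec n" and vc: "v \<in> carrier_vec n" using ST(1) T v by auto
  show "v \<in> span S"
  proof (rule ccontr)
    assume nv: "v \<notin> span S"
    have vS: "v \<notin> S" using nv span_mem[OF Sc] by auto
    have "lin_indpt (S \<union> {v})"
      using lin_dep_iff_in_span[OF Sc ST(2) vc vS] nv by simp
    hence "S \<union> {v} \<subseteq> T \<and> lin_indpt (S \<union> {v})" using ST(1) v by simp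
    hence "S \<union> {v} = S" using S unfolding maximal_def by blast
    thus False using vS by blast
  qed
qed

lemma rank_le_rows:
  assumes "A \<in> carrier_mat n m"
  shows "rank A \<le> n"
proof -
  obtain S where "rank A = card S" "S \<subseteq> set (cols A)" "lin_indpt S"
    by (rule obtain_maximal_indpt_cols[OF assms])
  moreover have "set (cols A) \<subseteq> carrier_vec n" using assms cols_dim by blast
  ultimately show ?thesis using li_le_dim(2)[of S] dim_is_n by auto
qed

lemma full_rank_left_annihilator:
  assumes A: "A \<in> carrier_mat n m" and r: "rank A = n" and u: "u \<in> carrier_vec n"
    and orth: "\<And>j. j < m \<Longrightarrow> u \<bullet> col A j = 0"
  shows "u = 0\<^sub>v n"
proof -
  obtain S where S: "rank A = card S" "S \<subseteq> set (cols A)" "lin_indpt S" "finite S"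
    by (rule obtain_maximal_indpt_cols[OF A])
  have cols: "set (cols A) \<subseteq> carrier_vec n" using A cols_dim by blast
  have "basis S" using dim_li_is_basis[of S] S cols r dim_is_n by auto
  hence span: "span S = carrier_vec n" unfolding basis_def by auto
  have "\<forall>v \<in> set (cols A). u \<bullet> v = 0" using A orth by (auto simp: cols_def)
  hence "u \<in> orthogonal_complement S"
    using S(2) u unfolding orthogonal_complement_def by auto
  hence "u \<in> orthogonal_complement (span S)" using S(2) cols by simp
  hence all: "\<forall>v \<in> carrier_vec n. u \<bullet> v = 0"
    unfolding span orthogonal_complement_def by auto
  have "u $ i = 0" if "i < n" for i
    using all that u by (metis scalar_prod_right_unit unit_vec_carrier)
  thus ?thesis using u by (intro eq_vecI) auto
qed

text \<open>Conversely, a matrix of deficient row rank has a nonzero vector orthogonal to all of its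
  columns: it is orthogonal to a maximal independent set of columns, hence to their span.\<close>
lemma low_rank_left_annihilator:
  assumes A: "A \<in> carrier_mat n m" and r: "rank A < n"
  shows "\<exists>u \<in> carrier_vec n. u \<noteq> 0\<^sub>v n \<and> (\<forall>j<m. u \<bullet> col A j = 0)"
proof -
  obtain S where max: "maximal S (\<lambda>T. T \<subseteq> set (cols A) \<and> lin_indpt T)"
    and S: "rank A = card S" "S \<subseteq> set (cols A)" "finite S"
    by (rule obtain_maximal_indpt_cols[OF A])
  have cols: "set (cols A) \<subseteq> carrier_vec n" using A cols_dim by blast
  obtain u where u: "u \<in> carrier_vec n" "u \<noteq> 0\<^sub>v n" "\<forall>v \<in> S. u \<bullet> v = 0"
    using few_vectors_common_orthogonal[of S n] S cols r by auto
  hence "u \<in> orthogonal_complement S" by (simp add: orthogonal_complement_def)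
  hence "u \<in> orthogonal_complement (span S)" using S(2) cols by simp
  hence "\<forall>v \<in> set (cols A). u \<bullet> v = 0"
    using maximal_indpt_spans[OF cols max] unfolding orthogonal_complement_def by auto
  thus ?thesis using u(1,2) A by (auto simp: cols_def)
qed

end

lemma codeword_carrier: "c \<in> codewords G \<Longrightarrow> c \<in> carrier_vec (dim_col G)"
  unfolding codewords_def by (auto intro!: carrier_vecI)

lemma codeword_index:
  fixes G :: "'a :: comm_semiring_0 mat"
  assumes G: "G \<in> carrier_mat k n" and u: "u \<in> carrier_vec k" and j: "j < n"
  shows "(transpose_mat G *\<^sub>v u) $ j = u \<bullet> col G j"
proof -
  have "col G j \<in> carrier_vec k" using G by (intro carrier_vecI) simp
  from comm_scalar_prod[OF this u] show ?thesis using G j by simp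
qed

lemma hweight_le_dim: "hweight c \<le> dim_vec c"
  unfolding hweight_def by (rule card_mono[of "{..<dim_vec c}", simplified]) auto

lemma hweight_vanishing:
  assumes "c \<in> carrier_vec n" "S \<subseteq> {..<n}" "\<And>j. j \<in> S \<Longrightarrow> c $ j = 0"
  shows "hweight c \<le> n - card S"
proof -
  have "hweight c \<le> card ({..<n} - S)"
    unfolding hweight_def using assms by (intro card_mono) auto
  also have "\<dots> = n - card S"
    using assms(2) by (simp add: card_Diff_subset finite_subset)
  finally show ?thesis .
qed

lemma dmin_le_hweight:
  assumes "c \<in> codewords G - {0\<^sub>v (dim_col G)}"
  shows "dmin G \<le> hweight c"
proof -
  have "hweight ` (codewords G - {0\<^sub>v (dim_col G)}) \<subseteq> {..dim_col G}"
  proof (rule image_subsetI)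
    fix c assume "c \<in> codewords G - {0\<^sub>v (dim_col G)}"
    hence "dim_vec c = dim_col G" by (meson DiffD1 carrier_vecD codeword_carrier)
    thus "hweight c \<in> {..dim_col G}" using hweight_le_dim[of c] by simp
  qed
  hence "finite (hweight ` (codewords G - {0\<^sub>v (dim_col G)}))"
    using finite_subset by blast
  thus ?thesis unfolding dmin_def using assms by (intro Min_le) auto
qed

lemma submatrix_col:
  assumes j: "j \<in> J" "j < dim_col A"
  defines "A' \<equiv> submatrix A {..<dim_row A} J" and "i \<equiv> card {a\<in>J. a < j}"
  shows "i < dim_col A'" and "col A' i = col A j"
proof -
  have "{a\<in>J. a < j} \<subset> {a. a < dim_col A \<and> a \<in> J}" using j by auto
  hence "card {a\<in>J. a < j} < card {a. a < dim_col A \<and> a \<in> J}"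
    by (rule psubset_card_mono[rotated]) simp
  thus i: "i < dim_col A'" unfolding i_def A'_def by (simp add: dim_submatrix)
  show "col A' i = col A j"
  proof (rule eq_vecI)
    fix r assume "r < dim_vec (col A j)"
    hence r: "r < dim_row A" by simp
    have "{a\<in>{..<dim_row A}. a < r} = {..<r}" using r by auto
    hence "card {a\<in>{..<dim_row A}. a < r} = r" by simp
    hence "A' $$ (r, i) = A $$ (r, j)"
      using submatrix_index_card[of r A j "{..<dim_row A}" J] r j
      unfolding A'_def i_def by simp
    thus "col A' i $ r = col A j $ r" using r i j(2) unfolding A'_def by (simp add: dim_submatrix)
  qed (simp add: A'_def dim_submatrix)
qed

lemma col_rank_le_rows: "col_rank G S \<le> dim_row G"
proof -
  have "submatrix G {..<dim_row G} S \<in>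
      carrier_mat (dim_row G) (dim_col (submatrix G {..<dim_row G} S))"
    by (auto simp: dim_submatrix)
  from vec_space.rank_le_rows[OF this] show ?thesis unfolding col_rank_def by simp
qed

text \<open>If the columns indexed by S have rank below k, some nonzero codeword vanishes on S: take
  u orthogonal to those columns; u G is nonzero because G itself has rank k.\<close>
lemma rank_deficient_columns_codeword:
  fixes G :: "bit mat"
  assumes G: "G \<in> carrier_mat k n" and gr: "gen_rank G = k" and Sn: "S \<subseteq> {..<n}"
    and deficient: "col_rank G S < k"
  obtains c where "c \<in> codewords G - {0\<^sub>v n}" "\<And>j. j \<in> S \<Longrightarrow> c $ j = 0"
proof -
  define A where "A = submatrix G {..<k} S"
  have "A \<in> carrier_mat k (dim_col A)"
    using G by (intro carrier_matI) (auto simp: A_def dim_submatrix)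
  moreover have "vec_space.rank k A < k" using deficient G unfolding col_rank_def A_def by simp
  ultimately obtain u where u: "u \<in> carrier_vec k" "u \<noteq> 0\<^sub>v k"
      and orthA: "\<forall>j<dim_col A. u \<bullet> col A j = 0"
    using vec_space.low_rank_left_annihilator by blast
  define c where "c = transpose_mat G *\<^sub>v u"
  have "c \<in> codewords G" unfolding codewords_def c_def using u G by auto
  moreover have "c \<noteq> 0\<^sub>v n"
  proof
    assume "c = 0\<^sub>v n"
    hence "u \<bullet> col G j = 0" if "j < n" for j
      using codeword_index[OF G u(1) that] that unfolding c_def by simp
    moreover have "vec_space.rank k G = k" using gr G unfolding gen_rank_def by simp
    ultimately show False
      using vec_space.full_rank_left_annihilator[OF G _ u(1)] u(2) by blast
  qed
  moreover have "c $ j = 0" if j: "j \<in> S" for j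
  proof -
    have jn: "j < dim_col G" using j Sn G by auto
    have "u \<bullet> col G j = 0"
      using submatrix_col[OF j jn] orthA G unfolding A_def by auto
    thus ?thesis using codeword_index[OF G u(1)] jn G unfolding c_def by simp
  qed
  ultimately show ?thesis using that[of c] by blast
qed

text \<open>The classical fact: any n - d + 1 columns of a generator matrix of a code with
  minimum distance d have full rank, since a rank deficiency would produce a nonzero
  codeword vanishing on those columns.\<close>
lemma col_rank_full:
  fixes G :: "bit mat"
  assumes G: "G \<in> carrier_mat k n" and gr: "gen_rank G = k" and Sn: "S \<subseteq> {..<n}"
    and big: "card S + dmin G > n"
  shows "col_rank G S = k"
proof (rule ccontr)
  assume "col_rank G S \<noteq> k"
  hence "col_rank G S < k" using col_rank_le_rows[of G S] G by simp
  then obtain c where c: "c \<in> codewords G - {0\<^sub>v n}" "\<And>j. j \<in> S \<Longrightarrow> c $ j = 0"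
    using rank_deficient_columns_codeword[OF G gr Sn] by blast
  have "c \<in> carrier_vec n" using c(1) codeword_carrier G by fastforce
  hence "hweight c \<le> n - card S" using hweight_vanishing Sn c(2) by blast
  moreover have "dmin G \<le> hweight c" using dmin_le_hweight c(1) G by simp
  moreover have "card S \<le> n" using Sn by (metis card_lessThan card_mono finite_lessThan)
  ultimately show False using big by linarith
qed

lemma e_tilde_plus_deficiency:
  assumes G: "G \<in> carrier_mat k n"
  shows "e_tilde G g + (\<Sum>S\<in>{S. S \<subseteq> {..<n} \<and> card S = g}. k - col_rank G S)
         = (n choose g) * k"
proof -
  let ?F = "{S. S \<subseteq> {..<n} \<and> card S = g}"
  have "e_tilde G g + (\<Sum>S\<in>?F. k - col_rank G S) = (\<Sum>S\<in>?F. col_rank G S + (k - col_rank G S))"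
    unfolding e_tilde_def using G by (simp add: sum.distrib)
  also have "\<dots> = (\<Sum>S\<in>?F. k)"
    using col_rank_le_rows[of G] G by (intro sum.cong) auto
  also have "\<dots> = (n choose g) * k" using n_subsets[of "{..<n}" g] by simp
  finally show ?thesis .
qed

lemma e_tilde_full:
  fixes G :: "bit mat"
  assumes G: "G \<in> carrier_mat k n" and gr: "gen_rank G = k" and big: "g + dmin G > n"
  shows "e_tilde G g = (n choose g) * k"
proof -
  have "(\<Sum>S\<in>{S. S \<subseteq> {..<n} \<and> card S = g}. k - col_rank G S) = 0"
  proof (intro sum.neutral ballI)
    fix S assume "S \<in> {S. S \<subseteq> {..<n} \<and> card S = g}"
    hence "col_rank G S = k" using col_rank_full[OF G gr, of S] big by simp
    thus "k - col_rank G S = 0" by simp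
  qed
  thus ?thesis using e_tilde_plus_deficiency[OF G, of g] by simp
qed

lemma e_tilde_plus_Delta:
  assumes G: "G \<in> carrier_mat k n" and n2: "n \<ge> 2"
  shows "e_tilde G (n - 2) + Delta G = (n choose 2) * k"
proof -
  have "e_tilde G (n - 2) + Delta G = (n choose (n - 2)) * k"
    using e_tilde_plus_deficiency[OF G, of "n - 2"] carrier_matD[OF G] unfolding Delta_def by simp
  thus ?thesis using binomial_symmetric[OF n2] by simp
qed

lemma e_tilde_top_layers:
  fixes G :: "bit mat"
  assumes G: "G \<in> carrier_mat k n" and gr: "gen_rank G = k" and n2: "n \<ge> 2"
    and d2: "dmin G \<ge> 2"
  shows "e_tilde G n = k" and "e_tilde G (n - 1) = n * k"
proof -
  show "e_tilde G n = k" using e_tilde_full[OF G gr, of n] d2 by simp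
  have "n choose (n - 1) = n" using binomial_symmetric[of 1 n] n2 by simp
  thus "e_tilde G (n - 1) = n * k" using e_tilde_full[OF G gr, of "n - 1"] n2 d2 by simp
qed

lemma a_coef_0:
  fixes G :: "bit mat"
  assumes G: "G \<in> carrier_mat k n" and gr: "gen_rank G = k" and n2: "n \<ge> 2"
    and d2: "dmin G \<ge> 2"
  shows "a_coef G 0 = 0"
  using e_tilde_top_layers[OF assms] carrier_matD(2)[OF G] unfolding a_coef_def by simp

lemma a_coef_1:
  fixes G :: "bit mat"
  assumes G: "G \<in> carrier_mat k n" and gr: "gen_rank G = k" and n2: "n \<ge> 2"
    and d2: "dmin G \<ge> 2"
  shows "a_coef G 1 = 2 * real (Delta G)"
proof -
  have e1: "real (e_tilde G (n - 1)) = real n * real k"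
    using e_tilde_top_layers(2)[OF assms] by simp
  have e2: "real (e_tilde G (n - 2)) = real (n choose 2) * real k - real (Delta G)"
    using arg_cong[OF e_tilde_plus_Delta[OF G n2], of real] by simp
  have choose2: "2 * real (n choose 2) = real n * (real n - 1)"
    using n2 by (simp add: choose_two of_nat_diff real_of_nat_div)
  have "a_coef G 1 = (real n - 1) * real (e_tilde G (n - 1)) - 2 * real (e_tilde G (n - 2))"
    using carrier_matD(2)[OF G] n2 unfolding a_coef_def by (simp add: of_nat_diff numeral_2_eq_2)
  also have "\<dots> = real n * (real n - 1) * real k - 2 * real (n choose 2) * real k
                  + 2 * real (Delta G)"
    unfolding e1 e2 by (simp add: algebra_simps)
  also have "\<dots> = 2 * real (Delta G)" unfolding choose2[symmetric] by simp
  finally show ?thesis .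
qed

lemma bernstein_term_deriv_at_0:
  fixes c :: real
  assumes "t < n"
  shows "((\<lambda>p. c * p ^ t * (1 - p) ^ (n - t - 1)) has_real_derivative
    ((if t = 0 then - real (n - 1) * c else 0) + (if t = 1 then c else 0))) (at 0)"
proof -
  have D: "((\<lambda>p. c * p ^ t * (1 - p) ^ (n - t - 1)) has_real_derivative
    (c * (real t * 0 ^ (t - 1)) * (1 - 0) ^ (n - t - 1) +
     (real (n - t - 1) * (1 - 0) ^ (n - t - 1 - 1) * (0 - 1)) * (c * 0 ^ t))) (at 0)"
    by (intro DERIV_mult DERIV_cmult) (auto intro!: derivative_eq_intros)
  consider "t = 0" | "t = 1" | "t \<ge> 2" by linarith
  thus ?thesis by cases (use D in \<open>auto simp: zero_power\<close>)
qed

lemma bernstein_sum_deriv_at_0: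
  fixes a :: "nat \<Rightarrow> real"
  assumes n2: "n \<ge> 2"
  shows "((\<lambda>p. \<Sum>t = 0..<n. a t * p ^ t * (1 - p) ^ (n - t - 1)) has_real_derivative
           a 1 - real (n - 1) * a 0) (at 0)"
proof -
  have "((\<lambda>p. \<Sum>t = 0..<n. a t * p ^ t * (1 - p) ^ (n - t - 1)) has_real_derivative
     (\<Sum>t = 0..<n. (if t = 0 then - real (n - 1) * a t else 0) + (if t = 1 then a t else 0)))
     (at 0)"
    by (intro DERIV_sum bernstein_term_deriv_at_0) simp
  moreover have "(\<Sum>t = 0..<n. (if t = 0 then - real (n - 1) * a t else 0) + (if t = 1 then a t else 0))
      = a 1 - real (n - 1) * a 0"
    using n2 by (simp add: sum.distrib of_nat_diff algebra_simps)
  ultimately show ?thesis by simp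
qed

lemma exit_cnd_deriv_at_0:
  assumes n2: "dim_col G \<ge> 2"
  shows "(exit_cnd G has_real_derivative
           (real (dim_col G - 1) * a_coef G 0 - a_coef G 1) / real (dim_col G)) (at 0)"
proof -
  have "((\<lambda>p. 1 - (1 / real (dim_col G)) *
      (\<Sum>t = 0..<dim_col G. a_coef G t * p ^ t * (1 - p) ^ (dim_col G - t - 1)))
      has_real_derivative 0 - (1 / real (dim_col G)) *
        (a_coef G 1 - real (dim_col G - 1) * a_coef G 0)) (at 0)"
    by (intro DERIV_diff DERIV_cmult DERIV_const bernstein_sum_deriv_at_0 n2)
  moreover have "0 - (1 / real (dim_col G)) * (a_coef G 1 - real (dim_col G - 1) * a_coef G 0)
      = (real (dim_col G - 1) * a_coef G 0 - a_coef G 1) / real (dim_col G)"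
    by (simp add: minus_divide_left)
  ultimately show ?thesis unfolding exit_cnd_def[abs_def] by simp
qed

lemma exit_cnd_slope:
  fixes G :: "bit mat"
  assumes G: "G \<in> carrier_mat k n" and gr: "gen_rank G = k" and n2: "n \<ge> 2"
    and d2: "dmin G \<ge> 2"
  shows "(exit_cnd G has_real_derivative - (2 * real (Delta G) / real n)) (at 0)"
  using exit_cnd_deriv_at_0[of G] carrier_matD(2)[OF G] n2
  unfolding a_coef_0[OF assms] a_coef_1[OF assms] by simp

lemma Delta_zero:
  fixes G :: "bit mat"
  assumes G: "G \<in> carrier_mat k n" and gr: "gen_rank G = k" and n2: "n \<ge> 2"
    and d3: "dmin G \<ge> 3"
  shows "Delta G = 0"
  using e_tilde_plus_Delta[OF G n2] e_tilde_full[OF G gr, of "n - 2"] n2 d3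
  by (simp add: binomial_symmetric[OF n2, symmetric])

text \<open>Slope at 0 of the SPC part sum_j rho_j (1-p)^(j-1), i.e. -rho'_SPC(1).\<close>
lemma spc_deriv_at_0:
  fixes r :: "nat \<Rightarrow> real"
  shows "((\<lambda>p. \<Sum>j = 2..J. r j * (1 - p) ^ (j - 1)) has_real_derivative
           - (\<Sum>j = 2..J. real (j - 1) * r j)) (at 0)"
proof -
  have "((\<lambda>p. \<Sum>j = 2..J. r j * (1 - p) ^ (j - 1)) has_real_derivative
      (\<Sum>j = 2..J. r j * (real (j - 1) * (1 - 0) ^ (j - 1 - 1) * - 1))) (at 0)"
    by (intro DERIV_sum) (auto intro!: derivative_eq_intros simp: algebra_simps)
  thus ?thesis by (simp add: sum_negf[symmetric] algebra_simps)
qed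

theorem mainTheorem6:
  fixes rhoSPC :: "nat \<Rightarrow> real" and J :: nat
    and Idx :: "'i set" and rho :: "'i \<Rightarrow> real" and G :: "'i \<Rightarrow> bit mat"
    and n k :: "'i \<Rightarrow> nat"
  assumes "finite Idx"
    and "\<And>j. rhoSPC j \<ge> 0"
    and "\<And>j. j > J \<Longrightarrow> rhoSPC j = 0"
    and "\<And>i. i \<in> Idx \<Longrightarrow> rho i \<ge> 0"
    and "(\<Sum>j = 2..J. rhoSPC j) + (\<Sum>i\<in>Idx. rho i) = 1"
    and "\<And>i. i \<in> Idx \<Longrightarrow> G i \<in> carrier_mat (k i) (n i)"
    and "\<And>i. i \<in> Idx \<Longrightarrow> gen_rank (G i) = k i"
    and "\<And>i. i \<in> Idx \<Longrightarrow> n i \<ge> 2"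
    and "\<And>i. i \<in> Idx \<Longrightarrow> k i \<ge> 1"
    and "\<And>i. i \<in> Idx \<Longrightarrow> dmin (G i) \<ge> 2"
  shows "((\<lambda>p. (\<Sum>j = 2..J. rhoSPC j * (1 - p) ^ (j - 1))
              + (\<Sum>i\<in>Idx. rho i * exit_cnd (G i) p))
         has_real_derivative
           (- (\<Sum>j = 2..J. real (j - 1) * rhoSPC j)
            - (\<Sum>i\<in>{i\<in>Idx. dmin (G i) = 2}. 2 * rho i / real (n i) * real (Delta (G i)))))
         (at 0)"
proof -
  let ?w = "\<lambda>i. 2 * rho i / real (n i) * real (Delta (G i))"
  have codes: "((\<lambda>p. \<Sum>i\<in>Idx. rho i * exit_cnd (G i) p) has_real_derivative
      (\<Sum>i\<in>Idx. rho i * - (2 * real (Delta (G i)) / real (n i)))) (at 0)"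
    by (intro DERIV_sum DERIV_cmult exit_cnd_slope[where k = "k _"]) (use assms in auto)
  have "rho i * - (2 * real (Delta (G i)) / real (n i)) = - (if dmin (G i) = 2 then ?w i else 0)"
    if i: "i \<in> Idx" for i
  proof (cases "dmin (G i) = 2")
    case False
    hence "dmin (G i) \<ge> 3" using assms(10)[OF i] by simp
    thus ?thesis using Delta_zero[OF assms(6-8)[OF i]] False by simp
  qed simp
  hence "(\<Sum>i\<in>Idx. rho i * - (2 * real (Delta (G i)) / real (n i)))
      = - (\<Sum>i\<in>Idx. if dmin (G i) = 2 then ?w i else 0)"
    by (simp only: sum_negf[symmetric] cong: sum.cong)
  also have "\<dots> = - (\<Sum>i\<in>{i\<in>Idx. dmin (G i) = 2}. ?w i)"
    by (simp only: sum.inter_filter[OF assms(1)])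
  finally show ?thesis using DERIV_add[OF spc_deriv_at_0 codes] by simp
qed

end
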